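(* In the setting described in the context, assume $0\notin X$ and that Assumption A2 holds. Then for each $i=1,\dots,K$ the function $H_i(x):=F_i(g_i(x))$ is concave on the convex hull $\mathrm{conv}\,S(p)$.
   Context: Setting. $N,K\ge1$; $X\subseteq\mathbb{R}^N$ nonempty closed convex; $D=(D_1,\dots,D_K)^T\in\mathbb{R}^K$; random vectors $v_1,\dots,v_K\in\mathbb{R}^N$, $V=[v_1,\dots,v_K]^T$; $p\in[0,1]$, $S(p):=\{x\in X:\mathbb{P}(Vx\le D)\ge p\}$. Each $v_i$ is elliptical: $v_i\overset{d}{=}\mu_i+A_iZ_i$, $A_iA_i^T=\Sigma_i$ positive definite, $Z_i$ spherical. For $x\ne0$, $\xi_i(x):=\frac{v_i^Tx-\mu_i^Tx}{\sqrt{x^T\Sigma_ix}}$ has a one-dimensional spherical distribution with distribution function $F_i$ independent of $x$, and $g_i(x):=\frac{D_i-\mu_i^Tx}{\sqrt{x^T\Sigma_ix}}$. For each $x\in X$ the joint distribution function of $(\xi_1(x),\dots,\xi_K(x))$ is $z\mapsto C_x(F_1(z_1),\dots,F_K(z_K))$ for a Gumbel–Hougaard copula $C_x(u)=\psi_x^{-1}(\sum_i\psi_x(u_i))$, $\psi_x(t)=(-\ln t)^{1/\kappa(x)}$, $\kappa:X\to(0,1]$. $r$-revealed-concavity with threshold $t^{**}(r)>0$: for $r<0$, $t\mapsto F(t^{1/r})$ concave on $(0,t^{**}(r)]$; for $r=0$, $t\mapsto F(e^t)$ concave on $[t^{**}(r),\infty)$; for $r>0$, $t\mapsto F(t^{1/r})$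 concave on $[t^{**}(r),\infty)$. Threshold values $\theta^*(b,\mu,\Sigma,r)$ for $r\ne0$ ($\lambda_{\min}$ least eigenvalue of $\Sigma$; for $\mu\ne0$, $1/\sqrt{\lambda_{\mu,\min}}=\max_{\|x\|=1}\frac{\mu^Tx}{\|\mu\|\sqrt{x^T\Sigma x}}$, $r^o=\frac{\|\mu\|^2}{(\mu^T\Sigma^{-1}\mu)\lambda_{\mu,\min}}$, $r^*=-2\sqrt{1/(r^o-1)+1}$): $0$ if $\mu=0,r<-1$; $\mu^T\Sigma^{-1}\mu$ if $\mu\ne0,b=0$; $\frac{1}{-1-r}[\mu^T\Sigma^{-1}\mu-(2+r)\|\mu\|^2/\lambda_{\min}]$ if $\mu\ne0,b<0,r\le-2$; $\mu^T\Sigma^{-1}\mu/(-1-r)$ if $\mu\ne0,b<0,-2<r<-1$; $\mu^T\Sigma^{-1}\mu+(2+r)\|\mu\|^2/\lambda_{\min}$ if $\mu\ne0,b<0,r\ge-1$; if $\mu\ne0,b>0,r<-1$: $c^2$ with $c=\sqrt{\frac{-r+2}{-r-2}}\sqrt{\mu^T\Sigma^{-1}\mu}$ when $r^o>1$ and $r\le r^*$, and $c=\frac{(-r)\|\mu\|/\sqrt{\lambda_{\mu,\min}}+\sqrt{(2+r)\|\mu\|^2/\lambda_{\mu,\min}+(-1-r)\mu^T\Sigma^{-1}\mu}}{-1-r}$ otherwise; undefined otherwise. Assumption A2: (1) for each $i$ there is $r_i\in\mathbb{R}$ with: if $r_i\ne0$, $F_i$ is $r_i$-revealed-concave with threshold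 $t_i^{**}(r_i)$; if $r_i=0$, there is $\varepsilon_0\in(0,1)$ with $F_i$ $(-\varepsilon_0)$-revealed-concave with threshold $t_i^{**}(-\varepsilon_0)$; (2) $p>p^*:=\max\{\frac12,\max_iF_i(\sqrt{\theta_i^*}),\max_iF_i(t_i^{**}(r_i)^{1/r_i})\}$ where $\theta_i^*=\theta^*(D_i,\mu_i,\Sigma_i,r_i)$ (assumed defined) if $r_i\ne0$, and if $r_i=0$ one takes $\theta_i^*=\theta^*(D_i,\mu_i,\Sigma_i,-\varepsilon_0)$ and replaces $F_i(t_i^{**}(r_i)^{1/r_i})$ by $F_i(t_i^{**}(-\varepsilon_0)^{-1/\varepsilon_0})$. *)

theory Defs
  imports "HOL-Probability.Probability"
begin

text \<open>Gumbel--Hougaard copula C(u) = psi^{-1}(sum_i psi(u_i)) with psi(t) = (-ln t) powr (1/kappa),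
  psi^{-1}(s) = exp(-(s powr kappa)).  Since psi(0) = +infinity, C(u) = 0 as soon as some u_i = 0
  (made explicit because ln 0 = 0 in Isabelle).\<close>
definition gumbel_copula :: "real \<Rightarrow> ('k::finite \<Rightarrow> real) \<Rightarrow> real" where
  "gumbel_copula \<kappa> u =
     (if \<exists>i. u i = 0 then 0
      else exp (- ((\<Sum>i\<in>UNIV. (- ln (u i)) powr (1 / \<kappa>)) powr \<kappa>)))"

definition revealed_concave :: "(real \<Rightarrow> real) \<Rightarrow> real \<Rightarrow> real \<Rightarrow> bool" where
  "revealed_concave F r t \<longleftrightarrow> t > 0 \<and>
     (if r < 0 then concave_on {0<..t} (\<lambda>s. F (s powr (1 / r)))
      else if r = 0 then concave_on {t..} (\<lambda>s. F (exp s))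
      else concave_on {t..} (\<lambda>s. F (s powr (1 / r))))"

definition pos_def_matrix :: "real^'n^'n \<Rightarrow> bool" where
  "pos_def_matrix S \<longleftrightarrow> transpose S = S \<and> (\<forall>x. x \<noteq> 0 \<longrightarrow> x \<bullet> (S *v x) > 0)"

definition spherical_rv :: "'a measure \<Rightarrow> ('a \<Rightarrow> real^'n) \<Rightarrow> bool" where
  "spherical_rv M Z \<longleftrightarrow> Z \<in> borel_measurable M \<and>
     (\<forall>Q::real^'n^'n. orthogonal_matrix Q \<longrightarrow> distr M borel (\<lambda>w. Q *v Z w) = distr M borel Z)"

definition lambda_min :: "real^'n^'n \<Rightarrow> real" where
  "lambda_min S = Inf {l. \<exists>v. v \<noteq> 0 \<and> S *v v = l *\<^sub>R v}"

definition lambda_mu_min :: "real^'n \<Rightarrow> real^'n^'n \<Rightarrow> real" where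
  "lambda_mu_min \<mu> S =
     1 / (Sup {(\<mu> \<bullet> x) / (norm \<mu> * sqrt (x \<bullet> (S *v x))) | x. norm x = 1})\<^sup>2"

definition quad_inv :: "real^'n \<Rightarrow> real^'n^'n \<Rightarrow> real" where
  "quad_inv \<mu> S = \<mu> \<bullet> (matrix_inv S *v \<mu>)"

definition theta_star :: "real \<Rightarrow> real^'n \<Rightarrow> real^'n^'n \<Rightarrow> real \<Rightarrow> real option" where
  "theta_star b \<mu> S r =
    (let q = quad_inv \<mu> S; lm = lambda_min S; lmu = lambda_mu_min \<mu> S;
         ro = (norm \<mu>)\<^sup>2 / (q * lmu); rs = - 2 * sqrt (1 / (ro - 1) + 1);
         c = (if ro > 1 \<and> r \<le> rs then sqrt ((- r + 2) / (- r - 2)) * sqrt q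
              else ((- r) * norm \<mu> / sqrt lmu
                    + sqrt ((2 + r) * (norm \<mu>)\<^sup>2 / lmu + (- 1 - r) * q)) / (- 1 - r))
     in if r = 0 then None
        else if \<mu> = 0 then (if r < -1 then Some 0 else None)
        else if b = 0 then Some q
        else if b < 0 then
          (if r \<le> -2 then Some (1 / (- 1 - r) * (q - (2 + r) * (norm \<mu>)\<^sup>2 / lm))
           else if r < -1 then Some (q / (- 1 - r))
           else Some (q + (2 + r) * (norm \<mu>)\<^sup>2 / lm))
        else (if r < -1 then Some (c\<^sup>2) else None))"

end

theory Submission
  imports Defs
begin

(* Whitening by A^T turns the constraint function into g(x) = G(A^T x) with
   G(y) = (D - w.y) / |y| and |w|^2 = mu^T Sigma^-1 mu.  Since F is a distribution function,
   p > p^* forces g > sqrt theta^* and g > t^**^(1/r) on S(p).  For D <= 0 this is impossible,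
   because then g <= |w| <= sqrt theta^*; otherwise r < -1 and sqrt theta^* = |w| (1 - r) / (-1 - r).
   Above that threshold G^r is convex (a second derivative computation along segments), and
   F(s^(1/r)) is concave and decreasing below t^**, so F o g = F((G^r)^(1/r)) is concave on the
   convex set where g exceeds both thresholds, which contains S(p). *)

section \<open>Convex functions\<close>

lemma convex_on_cong:
  assumes "convex_on S f" and "\<And>x. x \<in> S \<Longrightarrow> f x = g x"
  shows "convex_on S g"
  using assms unfolding convex_on_def convex_def by (smt (verit, best))

lemma convex_on_compose_linear:
  assumes "linear T" and "convex K" and "convex_on (T ` K) f"
  shows "convex_on K (\<lambda>x. f (T x))"
  using assms unfolding convex_on_def by (auto simp: linear_add linear_scale)

lemma concave_on_compose_antimono:
  fixes h :: "'a::real_vector \<Rightarrow> real"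
  assumes h: "convex_on K h" and \<phi>: "concave_on I \<phi>" and range: "h ` K \<subseteq> I"
    and antimono: "\<And>s t. s \<in> I \<Longrightarrow> t \<in> I \<Longrightarrow> s \<le> t \<Longrightarrow> \<phi> t \<le> \<phi> s"
  shows "concave_on K (\<lambda>x. \<phi> (h x))"
  unfolding concave_on_iff
proof (intro conjI ballI allI impI)
  show "convex K" using h by (rule convex_on_imp_convex)
  fix x y :: 'a and u v :: real
  assume x: "x \<in> K" and y: "y \<in> K" and uv: "0 \<le> u" "0 \<le> v" "u + v = 1"
  have "u * h x + v * h y \<in> I"
    using convexD[OF concave_on_imp_convex[OF \<phi>], of "h x" "h y" u v] range x y uv by auto
  moreover have "u *\<^sub>R x + v *\<^sub>R y \<in> K" using convexD[OF convex_on_imp_convex[OF h] x y uv] .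
  moreover have "h (u *\<^sub>R x + v *\<^sub>R y) \<le> u * h x + v * h y"
    using h x y uv unfolding convex_on_def by blast
  ultimately have "\<phi> (u * h x + v * h y) \<le> \<phi> (h (u *\<^sub>R x + v *\<^sub>R y))"
    using range by (intro antimono) auto
  moreover have "u * \<phi> (h x) + v * \<phi> (h y) \<le> \<phi> (u * h x + v * h y)"
    using \<phi> range x y uv unfolding concave_on_iff by (simp add: image_subset_iff)
  ultimately show "u * \<phi> (h x) + v * \<phi> (h y) \<le> \<phi> (h (u *\<^sub>R x + v *\<^sub>R y))" by linarith
qed

section \<open>Convexity of a powered distance ratio\<close>

lemma threshold_quadratic_nonneg:
  fixes r s g \<omega> :: real
  assumes r: "r < -1" and s: "0 \<le> s" and \<omega>: "\<omega>\<^sup>2 \<le> s\<^sup>2"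
    and g: "s * (1 - r) / (-1 - r) \<le> g"
  shows "0 \<le> (2 - r) * \<omega>\<^sup>2 - 2 * r * g * \<omega> - (r + 1) * g\<^sup>2 - s\<^sup>2"
proof -
  define C where "C = s * (1 - r) / (-1 - r)"
  have "s \<le> C" "(2 - r) * s \<le> (-r) * C" "C \<le> g"
    using r s g unfolding C_def by (simp_all add: field_simps)
  have "- s \<le> \<omega>" using \<omega> s power2_le_iff_abs_le by fastforce
  \<comment> \<open>the quadratic splits into two nonnegative products\<close>
  have first: "0 \<le> (-1 - r) * (g - s) * (g - C)"
    using r \<open>s \<le> C\<close> \<open>C \<le> g\<close> by simp
  have "(-1 - r) * (g - s) * (g - C) = (-1 - r) * g\<^sup>2 + 2 * r * g * s + (1 - r) * s\<^sup>2"
    using r unfolding C_def by (simp add: field_simps power2_eq_square)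
  moreover have "0 \<le> (\<omega> + s) * ((2 - r) * (\<omega> - s) - 2 * r * g)"
  proof -
    have "(-r) * C \<le> (-r) * g" using \<open>C \<le> g\<close> r by (intro mult_left_mono) auto
    moreover have "(2 - r) * (-2 * s) \<le> (2 - r) * (\<omega> - s)"
      using \<open>- s \<le> \<omega>\<close> r by (intro mult_left_mono) auto
    ultimately show ?thesis using \<open>(2 - r) * s \<le> (-r) * C\<close> \<open>- s \<le> \<omega>\<close> by simp
  qed
  moreover have "(2 - r) * \<omega>\<^sup>2 - 2 * r * g * \<omega> - (r + 1) * g\<^sup>2 - s\<^sup>2
      = ((-1 - r) * g\<^sup>2 + 2 * r * g * s + (1 - r) * s\<^sup>2) + (\<omega> + s) * ((2 - r) * (\<omega> - s) - 2 * r * g)"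
    by (simp add: algebra_simps power2_eq_square)
  ultimately show ?thesis using first by linarith
qed

lemma curvature_quadratic_nonpos:
  fixes r q g \<omega> m a \<gamma> :: real
  assumes r: "r < -1"
    and q: "0 \<le> q - \<omega>\<^sup>2"
    and threshold: "0 \<le> (2 - r) * \<omega>\<^sup>2 - 2 * r * g * \<omega> - (r + 1) * g\<^sup>2 - q"
    and CS: "(m - a * \<omega>)\<^sup>2 \<le> (q - \<omega>\<^sup>2) * (\<gamma> - a\<^sup>2)"
    and \<gamma>: "0 \<le> \<gamma> - a\<^sup>2"
  shows "(r - 1) * m\<^sup>2 + 2 * r * g * m * a + (r + 2) * g\<^sup>2 * a\<^sup>2 - g\<^sup>2 * \<gamma> \<le> 0"
proof -
  define k where "k = q - \<omega>\<^sup>2"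
  define s where "s = m - a * \<omega>"
  define z where "z = \<gamma> - a\<^sup>2"
  define ca where "ca = (r - 1) * \<omega>\<^sup>2 + 2 * r * g * \<omega> + (r + 1) * g\<^sup>2"
  define cs where "cs = (r - 1) * \<omega> + r * g"
  have kc: "k + ca \<le> 0" using threshold unfolding k_def ca_def by (simp add: algebra_simps)
  have form: "(r - 1) * m\<^sup>2 + 2 * r * g * m * a + (r + 2) * g\<^sup>2 * a\<^sup>2 - g\<^sup>2 * \<gamma>
      = ca * a\<^sup>2 + 2 * cs * a * s + (r - 1) * s\<^sup>2 - g\<^sup>2 * z"
    unfolding ca_def cs_def s_def z_def by (simp add: algebra_simps power2_eq_square)
  have sk: "s\<^sup>2 \<le> k * z" and k: "0 \<le> k" and z: "0 \<le> z"
    using CS q \<gamma> unfolding s_def k_def z_def by auto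
  show ?thesis
  proof (cases "k = 0")
    case True
    then have "s = 0" using sk by simp
    moreover have "ca * a\<^sup>2 \<le> 0" using kc True by (simp add: mult_nonpos_nonneg)
    moreover have "0 \<le> g\<^sup>2 * z" using z by simp
    ultimately show ?thesis unfolding form by simp
  next
    case False
    then have "0 < k" using k by simp
    \<comment> \<open>after multiplying by k and using s^2 \<le> k z, a binary quadratic form in (a, s)
      remains, whose determinant is - k g^2 (k + ca) \<ge> 0\<close>
    define d0 where "d0 = k * ca"
    define d1 where "d1 = k * cs"
    define d2 where "d2 = k * (r - 1) - g\<^sup>2"
    have d2: "d2 < 0" unfolding d2_def using \<open>0 < k\<close> r
      by (smt (verit) mult_pos_neg zero_le_power2)
    have "d0 * d2 - d1\<^sup>2 = - k * g\<^sup>2 * (k + ca)"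
      unfolding d0_def d1_def d2_def ca_def cs_def by (simp add: algebra_simps power2_eq_square)
    then have det: "0 \<le> d0 * d2 - d1\<^sup>2" using \<open>0 < k\<close> kc
      by (simp add: mult_nonneg_nonpos zero_le_mult_iff)
    have "d2 * (d0 * a\<^sup>2 + 2 * d1 * a * s + d2 * s\<^sup>2) = (d2 * s + d1 * a)\<^sup>2 + (d0 * d2 - d1\<^sup>2) * a\<^sup>2"
      by (simp add: algebra_simps power2_eq_square)
    with det have "0 \<le> d2 * (d0 * a\<^sup>2 + 2 * d1 * a * s + d2 * s\<^sup>2)" by simp
    then have neg: "d0 * a\<^sup>2 + 2 * d1 * a * s + d2 * s\<^sup>2 \<le> 0" using d2
      by (simp add: mult_le_0_iff zero_le_mult_iff)
    have "k * (ca * a\<^sup>2 + 2 * cs * a * s + (r - 1) * s\<^sup>2 - g\<^sup>2 * z)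
        = (d0 * a\<^sup>2 + 2 * d1 * a * s + d2 * s\<^sup>2) + g\<^sup>2 * (s\<^sup>2 - k * z)"
      unfolding d0_def d1_def d2_def by (simp add: algebra_simps)
    also have "\<dots> \<le> 0" using neg sk by (smt (verit) mult_nonneg_nonpos zero_le_power2)
    finally show ?thesis unfolding form using \<open>0 < k\<close> by (simp add: mult_le_0_iff)
  qed
qed

lemma ratio_powr_derivatives:
  fixes r l m \<alpha> \<beta> \<gamma> t :: real
  defines "L \<equiv> \<lambda>t. l - t * m"
    and "Q \<equiv> \<lambda>t. \<alpha> + 2 * t * \<beta> + t * t * \<gamma>"
  defines "f \<equiv> \<lambda>t. exp (r * (ln (L t) - ln (Q t) / 2))"
    and "p\<^sub>1 \<equiv> \<lambda>t. r * (- m / L t - (\<beta> + \<gamma> * t) / Q t)"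
    and "p\<^sub>2 \<equiv> \<lambda>t. r * (- m * m / (L t * L t)
                   - (\<gamma> * Q t - 2 * (\<beta> + \<gamma> * t) * (\<beta> + \<gamma> * t)) / (Q t * Q t))"
  assumes L: "0 < L t" and Q: "0 < Q t"
  shows "(f has_real_derivative f t * p\<^sub>1 t) (at t)"
    and "((\<lambda>t. f t * p\<^sub>1 t) has_real_derivative f t * (p\<^sub>1 t * p\<^sub>1 t + p\<^sub>2 t)) (at t)"
proof -
  have dL: "(L has_real_derivative - m) (at t)" unfolding L_def
    by (auto intro!: derivative_eq_intros)
  have dQ: "(Q has_real_derivative 2 * (\<beta> + \<gamma> * t)) (at t)" unfolding Q_def
    by (auto intro!: derivative_eq_intros simp: algebra_simps)
  have "((\<lambda>t. r * (ln (L t) - ln (Q t) / 2)) has_real_derivative p\<^sub>1 t) (at t)"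
    unfolding p\<^sub>1_def using L Q
    by (auto intro!: derivative_eq_intros dL dQ simp: field_simps)
  then show df: "(f has_real_derivative f t * p\<^sub>1 t) (at t)"
    unfolding f_def by (rule DERIV_fun_exp)
  have "(p\<^sub>1 has_real_derivative p\<^sub>2 t) (at t)"
    unfolding p\<^sub>1_def p\<^sub>2_def using L Q
    by (auto intro!: derivative_eq_intros dL dQ simp: field_simps power2_eq_square)
  from DERIV_mult[OF df this]
  show "((\<lambda>t. f t * p\<^sub>1 t) has_real_derivative f t * (p\<^sub>1 t * p\<^sub>1 t + p\<^sub>2 t)) (at t)"
    by (simp add: algebra_simps)
qed

lemma ratio_powr_curvature_nonneg:
  fixes A e w :: "'a::real_inner" and b r :: real
  assumes r: "r < -1" and A: "A \<noteq> 0"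
    and above: "norm w * (1 - r) / (-1 - r) < (b - w \<bullet> A) / norm A"
  defines "p\<^sub>1 \<equiv> r * (- (w \<bullet> e) / (b - w \<bullet> A) - (A \<bullet> e) / (A \<bullet> A))"
    and "p\<^sub>2 \<equiv> r * (- (w \<bullet> e) * (w \<bullet> e) / ((b - w \<bullet> A) * (b - w \<bullet> A))
                 - ((e \<bullet> e) * (A \<bullet> A) - 2 * (A \<bullet> e) * (A \<bullet> e)) / ((A \<bullet> A) * (A \<bullet> A)))"
  shows "0 \<le> p\<^sub>1 * p\<^sub>1 + p\<^sub>2"
proof -
  define N where "N = norm A"
  define u where "u = (1 / N) *\<^sub>R A"
  define g where "g = (b - w \<bullet> A) / N"
  define \<omega> where "\<omega> = w \<bullet> u"
  define a where "a = e \<bullet> u"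
  have N: "0 < N" using A unfolding N_def by simp
  have uu: "u \<bullet> u = 1" unfolding u_def N_def using N N_def
    by (simp add: power2_norm_eq_inner[symmetric] power2_eq_square)
  have "0 \<le> norm w * (1 - r) / (-1 - r)" using r by simp
  then have g: "0 < g" using above unfolding g_def N_def by linarith
  have L: "b - w \<bullet> A = g * N" and Q: "A \<bullet> A = N * N" and B: "A \<bullet> e = a * N"
    unfolding g_def a_def u_def N_def using N N_def
    by (simp_all add: inner_commute power2_norm_eq_inner[symmetric] power2_eq_square)
  have \<omega>: "\<omega>\<^sup>2 \<le> w \<bullet> w" using Cauchy_Schwarz_ineq[of w u] uu unfolding \<omega>_def by simp
  have "norm w * (1 - r) / (-1 - r) \<le> g" using above unfolding g_def N_def by simp
  then have threshold: "0 \<le> (2 - r) * \<omega>\<^sup>2 - 2 * r * g * \<omega> - (r + 1) * g\<^sup>2 - w \<bullet> w"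
    using threshold_quadratic_nonneg[of r "norm w" \<omega> g] r \<omega>
    by (simp add: power2_norm_eq_inner)
  \<comment> \<open>Cauchy-Schwarz for the components of w and e orthogonal to A\<close>
  define U where "U = w - \<omega> *\<^sub>R u"
  define V where "V = e - a *\<^sub>R u"
  have "U \<bullet> V = w \<bullet> e - a * \<omega>" "U \<bullet> U = w \<bullet> w - \<omega>\<^sup>2" "V \<bullet> V = e \<bullet> e - a\<^sup>2"
    unfolding U_def V_def \<omega>_def a_def using uu
    by (simp_all add: inner_diff_left inner_diff_right inner_commute algebra_simps power2_eq_square)
  then have "(w \<bullet> e - a * \<omega>)\<^sup>2 \<le> (w \<bullet> w - \<omega>\<^sup>2) * (e \<bullet> e - a\<^sup>2)" "0 \<le> e \<bullet> e - a\<^sup>2"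
    using Cauchy_Schwarz_ineq[of U V] inner_ge_zero[of V] by simp_all
  from curvature_quadratic_nonpos[OF r _ threshold this] \<omega>
  have E: "(r - 1) * (w \<bullet> e)\<^sup>2 + 2 * r * g * (w \<bullet> e) * a + (r + 2) * g\<^sup>2 * a\<^sup>2 - g\<^sup>2 * (e \<bullet> e) \<le> 0"
    by simp
  have "N\<^sup>2 * g\<^sup>2 * (p\<^sub>1 * p\<^sub>1 + p\<^sub>2)
      = r * ((r - 1) * (w \<bullet> e)\<^sup>2 + 2 * r * g * (w \<bullet> e) * a + (r + 2) * g\<^sup>2 * a\<^sup>2 - g\<^sup>2 * (e \<bullet> e))"
    unfolding p\<^sub>1_def p\<^sub>2_def L Q B using N g by (simp add: field_simps power2_eq_square)
  also have "\<dots> \<ge> 0" using E r by (simp add: mult_nonpos_nonpos)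
  finally have "0 \<le> N\<^sup>2 * g\<^sup>2 * (p\<^sub>1 * p\<^sub>1 + p\<^sub>2)" .
  moreover have "0 < N\<^sup>2 * g\<^sup>2" using N g by simp
  ultimately show ?thesis by (simp add: zero_le_mult_iff)
qed

lemma convex_on_segment_ratio_powr:
  fixes a e w :: "'a::real_inner" and b r :: real
  assumes r: "r < -1"
    and segment: "\<And>t. t \<in> {0..1} \<Longrightarrow> a + t *\<^sub>R e \<noteq> 0 \<and>
      norm w * (1 - r) / (-1 - r) < (b - w \<bullet> (a + t *\<^sub>R e)) / norm (a + t *\<^sub>R e)"
  shows "convex_on {0..1} (\<lambda>t. ((b - w \<bullet> (a + t *\<^sub>R e)) / norm (a + t *\<^sub>R e)) powr r)"
proof -
  define L where "L = (\<lambda>t. (b - w \<bullet> a) - t * (w \<bullet> e))"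
  define Q where "Q = (\<lambda>t. a \<bullet> a + 2 * t * (a \<bullet> e) + t * t * (e \<bullet> e))"
  define f where "f = (\<lambda>t. exp (r * (ln (L t) - ln (Q t) / 2)))"
  define p\<^sub>1 where "p\<^sub>1 = (\<lambda>t. r * (- (w \<bullet> e) / L t - (a \<bullet> e + (e \<bullet> e) * t) / Q t))"
  define p\<^sub>2 where "p\<^sub>2 = (\<lambda>t. r * (- (w \<bullet> e) * (w \<bullet> e) / (L t * L t)
      - ((e \<bullet> e) * Q t - 2 * (a \<bullet> e + (e \<bullet> e) * t) * (a \<bullet> e + (e \<bullet> e) * t)) / (Q t * Q t)))"
  have L: "L t = b - w \<bullet> (a + t *\<^sub>R e)" for t
    unfolding L_def by (simp add: inner_add_right algebra_simps)
  have Q: "Q t = (a + t *\<^sub>R e) \<bullet> (a + t *\<^sub>R e)" for t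
    unfolding Q_def by (simp add: inner_add_left inner_add_right inner_commute algebra_simps)
  have B: "a \<bullet> e + (e \<bullet> e) * t = (a + t *\<^sub>R e) \<bullet> e" for t
    by (simp add: inner_add_left)
  have pos: "0 < L t \<and> 0 < Q t" if "t \<in> {0..1}" for t
  proof -
    have "0 \<le> norm w * (1 - r) / (-1 - r)" using r by simp
    with segment[OF that] show ?thesis unfolding L Q
      by (smt (verit) divide_nonpos_pos inner_gt_zero_iff zero_less_norm_iff)
  qed
  have "convex_on {0..1} f"
  proof (rule f''_ge0_imp_convex)
    fix t :: real assume t: "t \<in> {0..1}"
    show "(f has_real_derivative f t * p\<^sub>1 t) (at t)"
      "((\<lambda>t. f t * p\<^sub>1 t) has_real_derivative f t * (p\<^sub>1 t * p\<^sub>1 t + p\<^sub>2 t)) (at t)"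
      using ratio_powr_derivatives[of "b - w \<bullet> a" t "w \<bullet> e" "a \<bullet> a" "a \<bullet> e" "e \<bullet> e" r] pos[OF t]
      unfolding f_def p\<^sub>1_def p\<^sub>2_def L_def Q_def by simp_all
    have "0 \<le> p\<^sub>1 t * p\<^sub>1 t + p\<^sub>2 t"
      using ratio_powr_curvature_nonneg[OF r, of "a + t *\<^sub>R e" w b e] segment[OF t]
      unfolding p\<^sub>1_def p\<^sub>2_def L Q B by simp
    moreover have "0 < f t" unfolding f_def by simp
    ultimately show "0 \<le> f t * (p\<^sub>1 t * p\<^sub>1 t + p\<^sub>2 t)" by simp
  qed simp
  moreover have "f t = ((b - w \<bullet> (a + t *\<^sub>R e)) / norm (a + t *\<^sub>R e)) powr r" if "t \<in> {0..1}" for t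
    using pos[OF that] unfolding f_def powr_def L[symmetric] norm_eq_sqrt_inner Q[symmetric]
    by (simp add: ln_div ln_sqrt)
  ultimately show ?thesis by (rule convex_on_cong)
qed

lemma convex_on_ratio_powr:
  fixes w :: "'a::real_inner" and b r :: real
  assumes r: "r < -1" and K: "convex K" "0 \<notin> K"
    and above: "\<And>y. y \<in> K \<Longrightarrow> norm w * (1 - r) / (-1 - r) < (b - w \<bullet> y) / norm y"
  shows "convex_on K (\<lambda>y. ((b - w \<bullet> y) / norm y) powr r)"
proof (rule convex_onI)
  fix t :: real and x z assume t: "0 < t" "t < 1" and x: "x \<in> K" and z: "z \<in> K"
  have segment: "(1 - s) *\<^sub>R x + s *\<^sub>R z = x + s *\<^sub>R (z - x)" for s
    by (simp add: algebra_simps)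
  have "x + s *\<^sub>R (z - x) \<in> K" if "s \<in> {0..1}" for s
    using convexD[OF K(1) x z, of "1 - s" s] that unfolding segment by simp
  then have "convex_on {0..1} (\<lambda>s. ((b - w \<bullet> (x + s *\<^sub>R (z - x))) / norm (x + s *\<^sub>R (z - x))) powr r)"
    using K(2) above by (intro convex_on_segment_ratio_powr[OF r]) fastforce
  from convex_onD[OF this, of t 0 1] t
  show "((b - w \<bullet> ((1 - t) *\<^sub>R x + t *\<^sub>R z)) / norm ((1 - t) *\<^sub>R x + t *\<^sub>R z)) powr r
      \<le> (1 - t) * ((b - w \<bullet> x) / norm x) powr r + t * ((b - w \<bullet> z) / norm z) powr r"
    unfolding segment by simp
qed (rule K(1))

lemma convex_ratio_superlevel:
  fixes w :: "'a::real_inner" and b c :: real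
  assumes K: "convex K" "0 \<notin> K" and c: "0 \<le> c"
  shows "convex {y \<in> K. c < (b - w \<bullet> y) / norm y}"
proof -
  have "c < (b - w \<bullet> y) / norm y \<longleftrightarrow> c * norm y + w \<bullet> y < b" if "y \<in> K" for y
  proof -
    have "0 < norm y" using K(2) that by auto
    then show ?thesis by (simp add: pos_less_divide_eq algebra_simps)
  qed
  then have "{y \<in> K. c < (b - w \<bullet> y) / norm y} = K \<inter> {y. c * norm y + w \<bullet> y < b}" by auto
  moreover have "convex {y. c * norm y + w \<bullet> y < b}"
  proof (rule convexI)
    fix y z :: 'a and u v :: real
    assume y: "y \<in> {y. c * norm y + w \<bullet> y < b}" and z: "z \<in> {y. c * norm y + w \<bullet> y < b}"
      and uv: "0 \<le> u" "0 \<le> v" "u + v = 1"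
    have "c * norm (u *\<^sub>R y + v *\<^sub>R z) \<le> u * (c * norm y) + v * (c * norm z)"
      using mult_left_mono[OF norm_triangle_ineq[of "u *\<^sub>R y" "v *\<^sub>R z"] c] uv
      by (simp add: algebra_simps)
    then have "c * norm (u *\<^sub>R y + v *\<^sub>R z) + w \<bullet> (u *\<^sub>R y + v *\<^sub>R z)
        \<le> u * (c * norm y + w \<bullet> y) + v * (c * norm z + w \<bullet> z)"
      by (simp add: inner_add_right algebra_simps)
    also have "\<dots> < b" using y z uv by (intro convex_bound_lt) auto
    finally show "u *\<^sub>R y + v *\<^sub>R z \<in> {y. c * norm y + w \<bullet> y < b}" by simp
  qed
  ultimately show ?thesis using K(1) by (simp add: convex_Int)
qed

lemma ratio_le_norm:
  fixes w y :: "'a::real_inner"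
  assumes "b \<le> 0" and "y \<noteq> 0"
  shows "(b - w \<bullet> y) / norm y \<le> norm w"
proof -
  have "b - w \<bullet> y \<le> norm w * norm y"
    using assms(1) norm_cauchy_schwarz[of "- w" y] by simp
  then show ?thesis using assms(2) by (simp add: pos_divide_le_eq)
qed

lemma concave_on_convex_hull_revealed_concave_ratio:
  fixes T :: "'a::real_vector \<Rightarrow> 'b::real_inner" and F :: "real \<Rightarrow> real"
  assumes T: "linear T" and X: "convex X" "\<And>x. x \<in> X \<Longrightarrow> T x \<noteq> 0"
    and r: "r < -1" and F: "mono F" "revealed_concave F r t"
    and S: "\<And>x. x \<in> S \<Longrightarrow> x \<in> X \<and>
      max (norm w * (1 - r) / (-1 - r)) (t powr (1 / r)) < (b - w \<bullet> T x) / norm (T x)"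
  shows "concave_on (convex hull S) (\<lambda>x. F ((b - w \<bullet> T x) / norm (T x)))"
proof -
  define G where "G y = (b - w \<bullet> y) / norm y" for y
  define c where "c = max (norm w * (1 - r) / (-1 - r)) (t powr (1 / r))"
  define K where "K = {y \<in> T ` X. c < G y}"
  define W where "W = {x \<in> X. T x \<in> K}"
  have t: "0 < t" and \<phi>: "concave_on {0<..t} (\<lambda>s. F (s powr (1 / r)))"
    using F(2) r unfolding revealed_concave_def by auto
  have "0 \<le> norm w * (1 - r) / (-1 - r)" using r by simp
  then have c: "0 \<le> c" "norm w * (1 - r) / (-1 - r) \<le> c" "t powr (1 / r) \<le> c"
    unfolding c_def by auto
  have TX: "convex (T ` X)" "0 \<notin> T ` X" using convex_linear_image[OF T X(1)] X(2) by auto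
  have "convex K" unfolding K_def G_def by (rule convex_ratio_superlevel[OF TX c(1)])
  moreover have "W = X \<inter> T -` K" unfolding W_def by auto
  ultimately have "convex W" using convex_linear_vimage[OF T] X(1) by (simp add: convex_Int)
  have "convex_on K (\<lambda>y. G y powr r)"
    unfolding G_def using \<open>convex K\<close> TX(2) c(2)
    by (intro convex_on_ratio_powr[OF r]) (auto simp: K_def G_def)
  moreover have "T ` W \<subseteq> K" unfolding W_def by auto
  ultimately have "convex_on (T ` W) (\<lambda>y. G y powr r)"
    using convex_on_subset convex_linear_image[OF T \<open>convex W\<close>] by blast
  then have "convex_on W (\<lambda>x. G (T x) powr r)"
    by (rule convex_on_compose_linear[OF T \<open>convex W\<close>])
  moreover have "G (T x) powr r \<in> {0<..t}" if "x \<in> W" for x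
  proof -
    have "t powr (1 / r) < G (T x)" using that c(3) unfolding W_def K_def by auto
    moreover have "0 < t powr (1 / r)" using t by simp
    ultimately have "0 < G (T x)" and "G (T x) powr r < (t powr (1 / r)) powr r"
      using r by (linarith, intro powr_less_mono2_neg) auto
    then show ?thesis using t r by (simp add: powr_powr)
  qed
  moreover have "F (s' powr (1 / r)) \<le> F (s powr (1 / r))" if "s \<in> {0<..t}" "s \<le> s'" for s s'
    using that r by (intro monoD[OF F(1)] powr_mono2') auto
  ultimately have "concave_on W (\<lambda>x. F ((G (T x) powr r) powr (1 / r)))"
    by (intro concave_on_compose_antimono[OF _ \<phi>]) auto
  then have "concave_on W (\<lambda>x. F (G (T x)))"
    unfolding concave_on_def
  proof (rule convex_on_cong)
    fix x assume "x \<in> W"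
    then have "0 < G (T x)" using c(1) unfolding W_def K_def by auto
    then show "- F ((G (T x) powr r) powr (1 / r)) = - F (G (T x))" using r by (simp add: powr_powr)
  qed
  moreover have "convex hull S \<subseteq> W"
    using S \<open>convex W\<close> by (intro hull_minimal) (auto simp: W_def K_def G_def c_def)
  ultimately show ?thesis
    unfolding concave_on_def G_def by (rule convex_on_subset) (rule convex_convex_hull)
qed

section \<open>Positive definite matrices and whitening\<close>

lemma quadratic_form_factor:
  fixes A S :: "real^'n^'n"
  assumes "A ** transpose A = S"
  shows "x \<bullet> (S *v y) = (transpose A *v x) \<bullet> (transpose A *v y)"
proof -
  have "S *v y = A *v (transpose A *v y)" using assms by (metis matrix_vector_mul_assoc)
  then show ?thesis by (simp add: dot_lmul_matrix)
qed

lemma symmetric_matrix_inner_commute: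
  fixes S :: "real^'n^'n"
  assumes "transpose S = S"
  shows "x \<bullet> (S *v y) = y \<bullet> (S *v x)"
  by (metis assms dot_lmul_matrix inner_commute transpose_transpose vector_transpose_matrix)

lemma pos_def_matrix_inv_right:
  fixes S :: "real^'n^'n"
  assumes "pos_def_matrix S"
  shows "S *v (matrix_inv S *v v) = v"
proof -
  have "inj ((*v) S)"
  proof (rule injI)
    fix x y assume "S *v x = S *v y"
    then have "(x - y) \<bullet> (S *v (x - y)) = 0" by (simp add: matrix_vector_mult_diff_distrib)
    then show "x = y" using assms unfolding pos_def_matrix_def by (metis less_irrefl right_minus_eq)
  qed
  then have "invertible S"
    using matrix_left_invertible_injective invertible_left_inverse by blast
  then have "S ** matrix_inv S = mat 1"
    unfolding invertible_def matrix_inv_def by (rule someI_ex[THEN conjunct1])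
  then show ?thesis by (simp add: matrix_vector_mul_assoc)
qed

lemma rayleigh_minimizer_eigenvector:
  fixes S :: "real^'n^'n"
  assumes sym: "transpose S = S" and e: "norm e = 1"
    and min: "\<And>x. (e \<bullet> (S *v e)) * (norm x)\<^sup>2 \<le> x \<bullet> (S *v x)"
  shows "S *v e = (e \<bullet> (S *v e)) *\<^sub>R e"
proof (rule ccontr)
  define \<rho> where "\<rho> = e \<bullet> (S *v e)"
  define P where "P x = x \<bullet> (S *v x) - \<rho> * (norm x)\<^sup>2" for x
  define d where "d = S *v e - \<rho> *\<^sub>R e"
  assume "S *v e \<noteq> (e \<bullet> (S *v e)) *\<^sub>R e"
  then have d: "0 < d \<bullet> d" unfolding d_def \<rho>_def by simp
  have P: "0 \<le> P x" for x using min unfolding P_def \<rho>_def by simp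
  \<comment> \<open>P vanishes at its minimum e, so its first variation in the direction d must vanish too\<close>
  have expand: "P (e + t *\<^sub>R d) = 2 * t * (d \<bullet> d) + t\<^sup>2 * P d" for t
  proof -
    have "e \<bullet> e = 1" using e by (simp add: dot_square_norm)
    moreover have "e \<bullet> (S *v d) = d \<bullet> (S *v e)" by (rule symmetric_matrix_inner_commute[OF sym])
    ultimately show ?thesis
      unfolding P_def d_def \<rho>_def power2_norm_eq_inner
      by (simp add: matrix_vector_right_distrib matrix_vector_mult_scaleR matrix_vector_mult_diff_distrib
          inner_add_left inner_add_right inner_diff_left inner_diff_right inner_commute
          algebra_simps power2_eq_square)
  qed
  obtain a b where a: "a = d \<bullet> d" "0 < a" and b: "b = P d" "0 \<le> b" using d P by blast
  define t where "t = - a / (b + a)"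
  have "t < 0" "- a < t * b" unfolding t_def using a(2) b(2) by (simp_all add: field_simps)
  then have "t * (2 * a + t * b) < 0" using a(2) by (intro mult_neg_pos) auto
  then show False using P[of "e + t *\<^sub>R d"] unfolding expand a b by (simp add: algebra_simps power2_eq_square)
qed

lemma lambda_min_pos_def:
  fixes S :: "real^'n^'n"
  assumes "pos_def_matrix S"
  shows "0 < lambda_min S" and "lambda_min S * (norm x)\<^sup>2 \<le> x \<bullet> (S *v x)"
proof -
  define f where "f x = x \<bullet> (S *v x)" for x :: "real^'n"
  have sym: "transpose S = S" and pos: "\<And>x. x \<noteq> 0 \<Longrightarrow> 0 < f x"
    using assms unfolding pos_def_matrix_def f_def by auto
  have "continuous_on (sphere 0 1) f" unfolding f_def by (intro continuous_intros)
  moreover have "sphere (0::real^'n) 1 \<noteq> {}"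
    by (metis norm_sgn sgn_zero vector_choose_size zero_le_one zero_neq_one mem_sphere_0 empty_iff)
  ultimately obtain e where e: "norm e = 1" and min: "\<And>y. norm y = 1 \<Longrightarrow> f e \<le> f y"
    using continuous_attains_inf[OF compact_sphere] by (metis mem_sphere_0)
  have bound: "f e * (norm x)\<^sup>2 \<le> f x" for x
  proof (cases "x = 0")
    case False
    have "f e \<le> f ((1 / norm x) *\<^sub>R x)" using False by (intro min) simp
    also have "\<dots> = f x / (norm x)\<^sup>2"
      unfolding f_def by (simp add: matrix_vector_mult_scaleR power2_eq_square divide_simps)
    finally show ?thesis using False by (simp add: field_simps)
  qed (simp add: f_def)
  have "lambda_min S = f e" unfolding lambda_min_def
  proof (rule cInf_eq_minimum)
    have "S *v e = f e *\<^sub>R e"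
      unfolding f_def by (rule rayleigh_minimizer_eigenvector[OF sym e]) (use bound in \<open>simp add: f_def\<close>)
    moreover have "e \<noteq> 0" using e by auto
    ultimately show "f e \<in> {l. \<exists>v. v \<noteq> 0 \<and> S *v v = l *\<^sub>R v}" by blast
  next
    fix l assume "l \<in> {l. \<exists>v. v \<noteq> 0 \<and> S *v v = l *\<^sub>R v}"
    then obtain v where "v \<noteq> 0" "S *v v = l *\<^sub>R v" by blast
    then show "f e \<le> l" using bound[of v] unfolding f_def by (simp add: power2_norm_eq_inner)
  qed
  moreover have "0 < f e" using e by (intro pos) auto
  ultimately show "0 < lambda_min S" "lambda_min S * (norm x)\<^sup>2 \<le> x \<bullet> (S *v x)"
    using bound[of x] unfolding f_def by simp_all
qed

lemma quad_inv_le_lambda_min: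
  fixes S :: "real^'n^'n"
  assumes "pos_def_matrix S"
  shows "quad_inv \<mu> S \<le> (norm \<mu>)\<^sup>2 / lambda_min S"
proof -
  define y where "y = matrix_inv S *v \<mu>"
  define l where "l = lambda_min S"
  have l: "0 < l" unfolding l_def by (rule lambda_min_pos_def[OF assms])
  have "S *v y = \<mu>" unfolding y_def by (rule pos_def_matrix_inv_right[OF assms])
  then have q: "quad_inv \<mu> S = y \<bullet> (S *v y)" unfolding quad_inv_def y_def by (simp add: inner_commute)
  then have lower: "l * (norm y)\<^sup>2 \<le> quad_inv \<mu> S"
    unfolding l_def using lambda_min_pos_def(2)[OF assms] by simp
  have upper: "quad_inv \<mu> S \<le> norm \<mu> * norm y"
    unfolding quad_inv_def y_def[symmetric] by (rule norm_cauchy_schwarz)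
  have "l * quad_inv \<mu> S \<le> (norm \<mu>)\<^sup>2"
  proof (cases "y = 0")
    case False
    have "l * norm y * norm y \<le> norm \<mu> * norm y"
      using lower upper by (simp add: power2_eq_square mult.assoc)
    then have "l * norm y \<le> norm \<mu>" using False by simp
    then have "l * (norm \<mu> * norm y) \<le> norm \<mu> * norm \<mu>"
      by (metis mult.left_commute mult_left_mono norm_ge_zero)
    moreover have "l * quad_inv \<mu> S \<le> l * (norm \<mu> * norm y)" using upper l by simp
    ultimately show ?thesis by (simp add: power2_eq_square)
  qed (simp add: q)
  then show ?thesis using l unfolding l_def by (simp add: pos_le_divide_eq mult.commute)
qed

lemma quad_inv_pos:
  fixes S :: "real^'n^'n"
  assumes S: "pos_def_matrix S" and \<mu>: "\<mu> \<noteq> 0"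
  shows "0 < quad_inv \<mu> S"
proof -
  define y where "y = matrix_inv S *v \<mu>"
  have "S *v y = \<mu>" unfolding y_def by (rule pos_def_matrix_inv_right[OF S])
  then have "y \<noteq> 0" and "quad_inv \<mu> S = y \<bullet> (S *v y)"
    using \<mu> unfolding quad_inv_def y_def by (auto simp: inner_commute)
  then show ?thesis using S unfolding pos_def_matrix_def by simp
qed

lemma whitened_mean:
  fixes A S :: "real^'n^'n" and \<mu> :: "real^'n"
  assumes A: "A ** transpose A = S" and S: "pos_def_matrix S"
  defines "w \<equiv> transpose A *v (matrix_inv S *v \<mu>)"
  shows "\<mu> \<bullet> x = w \<bullet> (transpose A *v x)" and "quad_inv \<mu> S = (norm w)\<^sup>2"
proof -
  have "S *v (matrix_inv S *v \<mu>) = \<mu>" by (rule pos_def_matrix_inv_right[OF S])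
  then have mean: "\<mu> \<bullet> x = w \<bullet> (transpose A *v x)" for x
    unfolding w_def using quadratic_form_factor[OF A, of x "matrix_inv S *v \<mu>"]
    by (simp add: inner_commute)
  then show "\<mu> \<bullet> x = w \<bullet> (transpose A *v x)" .
  show "quad_inv \<mu> S = (norm w)\<^sup>2"
    unfolding quad_inv_def mean by (simp add: w_def power2_norm_eq_inner)
qed

lemma lambda_mu_min_whitened:
  fixes A S :: "real^'n^'n"
  assumes A: "A ** transpose A = S" and S: "pos_def_matrix S" and \<mu>: "\<mu> \<noteq> 0"
  shows "lambda_mu_min \<mu> S = (norm \<mu>)\<^sup>2 / quad_inv \<mu> S"
proof -
  define y where "y = matrix_inv S *v \<mu>"
  define w where "w = transpose A *v y"
  have mean: "\<mu> \<bullet> x = w \<bullet> (transpose A *v x)" for x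
    using whitened_mean(1)[OF A S] unfolding w_def y_def .
  have q: "quad_inv \<mu> S = (norm w)\<^sup>2"
    using whitened_mean(2)[OF A S] unfolding w_def y_def .
  have root: "sqrt (x \<bullet> (S *v x)) = norm (transpose A *v x)" for x
    unfolding quadratic_form_factor[OF A] by (simp add: norm_eq_sqrt_inner)
  have nonzero: "transpose A *v x \<noteq> 0" if "x \<noteq> 0" for x
    using S that unfolding pos_def_matrix_def quadratic_form_factor[OF A] by fastforce
  have "0 < (norm w)\<^sup>2" using quad_inv_pos[OF S \<mu>] q by simp
  then have w: "0 < norm w" by simp
  have "y \<noteq> 0" using pos_def_matrix_inv_right[OF S, of \<mu>] \<mu> unfolding y_def by auto
  then have y: "0 < norm y" by simp
  \<comment> \<open>the supremum is attained in the direction y, whose whitened image is parallel to w\<close>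
  have "Sup {(\<mu> \<bullet> x) / (norm \<mu> * sqrt (x \<bullet> (S *v x))) | x. norm x = 1} = norm w / norm \<mu>"
  proof (rule cSup_eq_maximum)
    define x where "x = (1 / norm y) *\<^sub>R y"
    have "transpose A *v x = (1 / norm y) *\<^sub>R w"
      unfolding x_def w_def by (simp add: matrix_vector_mult_scaleR)
    then have "(\<mu> \<bullet> x) / (norm \<mu> * sqrt (x \<bullet> (S *v x))) = norm w / norm \<mu>"
      unfolding mean root using y w by (simp add: field_simps power2_norm_eq_inner[symmetric] power2_eq_square)
    moreover have "norm x = 1" unfolding x_def using y by simp
    ultimately show "norm w / norm \<mu> \<in> {(\<mu> \<bullet> x) / (norm \<mu> * sqrt (x \<bullet> (S *v x))) | x. norm x = 1}"
      by force
  next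
    fix z assume "z \<in> {(\<mu> \<bullet> x) / (norm \<mu> * sqrt (x \<bullet> (S *v x))) | x. norm x = 1}"
    then obtain x where x: "norm x = 1" and z: "z = (\<mu> \<bullet> x) / (norm \<mu> * sqrt (x \<bullet> (S *v x)))"
      by blast
    have "x \<noteq> 0" using x by auto
    then have Ax: "0 < norm (transpose A *v x)" using nonzero by simp
    have "z \<le> (norm w * norm (transpose A *v x)) / (norm \<mu> * norm (transpose A *v x))"
      unfolding z root mean using Ax \<mu> by (intro divide_right_mono norm_cauchy_schwarz) auto
    then show "z \<le> norm w / norm \<mu>" using Ax by simp
  qed
  then show ?thesis unfolding lambda_mu_min_def q by (simp add: power_divide)
qed

section \<open>The threshold theta star\<close>

lemma theta_star_nonpos_ge_quad_inv:
  fixes S :: "real^'n^'n"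
  assumes S: "pos_def_matrix S" and r: "r \<noteq> 0" and b: "b \<le> 0" and \<mu>: "\<mu> \<noteq> 0"
    and \<theta>: "theta_star b \<mu> S r = Some \<theta>"
  shows "quad_inv \<mu> S \<le> \<theta>"
proof -
  define q where "q = quad_inv \<mu> S"
  define K where "K = (norm \<mu>)\<^sup>2 / lambda_min S"
  have q: "0 < q" "q \<le> K" unfolding q_def K_def
    using quad_inv_pos[OF S \<mu>] quad_inv_le_lambda_min[OF S] by auto
  consider "b = 0" | "b < 0" "r \<le> -2" | "b < 0" "-2 < r" "r < -1" | "b < 0" "-1 \<le> r"
    using b by linarith
  then show ?thesis
  proof cases
    case 1
    then show ?thesis using \<theta> r \<mu> unfolding theta_star_def Let_def by auto
  next
    case 2
    then have "\<theta> = 1 / (- 1 - r) * (q - (2 + r) * K)"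
      using \<theta> r \<mu> unfolding theta_star_def Let_def q_def K_def by (auto split: if_splits)
    moreover have "q * (- 1 - r) \<le> q - (2 + r) * K"
      using 2 q mult_right_mono_neg[of q K "2 + r"] by (simp add: algebra_simps)
    ultimately show ?thesis using 2 unfolding q_def by (simp add: pos_le_divide_eq)
  next
    case 3
    then have "\<theta> = q / (- 1 - r)"
      using \<theta> r \<mu> unfolding theta_star_def Let_def q_def by (auto split: if_splits)
    moreover have "q * (- 1 - r) \<le> q" using 3 q by (simp add: mult_left_le)
    ultimately show ?thesis using 3 unfolding q_def by (simp add: pos_le_divide_eq)
  next
    case 4
    then have "\<theta> = q + (2 + r) * K"
      using \<theta> r \<mu> unfolding theta_star_def Let_def q_def K_def by (auto split: if_splits)
    moreover have "0 \<le> K" using q by simp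
    ultimately show ?thesis using 4 unfolding q_def by simp
  qed
qed

lemma theta_star_pos:
  fixes A S :: "real^'n^'n"
  assumes A: "A ** transpose A = S" and S: "pos_def_matrix S" and r: "r \<noteq> 0"
    and b: "0 < b \<or> \<mu> = 0" and \<theta>: "theta_star b \<mu> S r = Some \<theta>"
  shows "r < -1 \<and> \<theta> = (sqrt (quad_inv \<mu> S) * (1 - r) / (-1 - r))\<^sup>2"
proof (cases "\<mu> = 0")
  case True
  then show ?thesis using \<theta> r unfolding theta_star_def Let_def quad_inv_def by (auto split: if_splits)
next
  case False
  define q where "q = quad_inv \<mu> S"
  have q: "0 < q" unfolding q_def by (rule quad_inv_pos[OF S False])
  have lmu: "lambda_mu_min \<mu> S = (norm \<mu>)\<^sup>2 / q"
    unfolding q_def by (rule lambda_mu_min_whitened[OF A S False])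
  \<comment> \<open>r^o = 1, so the second formula for c applies, and it collapses to sqrt q (1 - r) / (-1 - r)\<close>
  have "(norm \<mu>)\<^sup>2 / (q * ((norm \<mu>)\<^sup>2 / q)) = 1" using False q by simp
  then have "r < -1 \<and> \<theta> = (((- r) * norm \<mu> / sqrt ((norm \<mu>)\<^sup>2 / q)
      + sqrt ((2 + r) * (norm \<mu>)\<^sup>2 / ((norm \<mu>)\<^sup>2 / q) + (- 1 - r) * q)) / (- 1 - r))\<^sup>2"
    using \<theta> r b False unfolding theta_star_def Let_def lmu q_def[symmetric] by (auto split: if_splits)
  moreover have "sqrt ((norm \<mu>)\<^sup>2 / q) = norm \<mu> / sqrt q"
    by (simp add: real_sqrt_divide)
  moreover have "(2 + r) * (norm \<mu>)\<^sup>2 / ((norm \<mu>)\<^sup>2 / q) + (- 1 - r) * q = q"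
    using False by (simp add: field_simps)
  ultimately show ?thesis
    using False q unfolding q_def[symmetric] by (simp add: field_simps)
qed

lemma theta_star_cases:
  fixes A S :: "real^'n^'n"
  assumes A: "A ** transpose A = S" and S: "pos_def_matrix S" and r: "r \<noteq> 0"
    and \<theta>: "theta_star b \<mu> S r = Some \<theta>"
  shows "(b \<le> 0 \<and> quad_inv \<mu> S \<le> \<theta>) \<or> (r < -1 \<and> \<theta> = (sqrt (quad_inv \<mu> S) * (1 - r) / (-1 - r))\<^sup>2)"
  using theta_star_nonpos_ge_quad_inv[OF S r _ _ \<theta>] theta_star_pos[OF A S r _ \<theta>] by fastforce

lemma concave_on_convex_hull_above_theta_star:
  fixes A S :: "real^'n^'n" and X C :: "(real^'n) set" and F :: "real \<Rightarrow> real"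
  assumes A: "A ** transpose A = S" and S: "pos_def_matrix S"
    and X: "convex X" "0 \<notin> X"
    and r: "r \<noteq> 0" and \<theta>: "theta_star b \<mu> S r = Some \<theta>"
    and F: "mono F" "revealed_concave F r t"
    and C: "\<And>x. x \<in> C \<Longrightarrow>
      x \<in> X \<and> max (sqrt \<theta>) (t powr (1 / r)) < (b - \<mu> \<bullet> x) / sqrt (x \<bullet> (S *v x))"
  shows "concave_on (convex hull C) (\<lambda>x. F ((b - \<mu> \<bullet> x) / sqrt (x \<bullet> (S *v x))))"
proof -
  define T where "T = transpose A"
  define w where "w = T *v (matrix_inv S *v \<mu>)"
  have form: "x \<bullet> (S *v x) = (norm (T *v x))\<^sup>2" for x
    unfolding T_def quadratic_form_factor[OF A] by (simp add: power2_norm_eq_inner)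
  have T: "T *v x \<noteq> 0" if "x \<noteq> 0" for x
    using S that form unfolding pos_def_matrix_def by fastforce
  have mean: "\<mu> \<bullet> x = w \<bullet> (T *v x)" for x
    unfolding w_def T_def by (rule whitened_mean(1)[OF A S])
  have ratio: "(b - \<mu> \<bullet> x) / sqrt (x \<bullet> (S *v x)) = (b - w \<bullet> (T *v x)) / norm (T *v x)" for x
    unfolding form mean by simp
  have q: "quad_inv \<mu> S = (norm w)\<^sup>2"
    unfolding w_def T_def by (rule whitened_mean(2)[OF A S])
  from theta_star_cases[OF A S r \<theta>]
  consider "b \<le> 0" "norm w \<le> sqrt \<theta>" | "r < -1" "sqrt \<theta> = norm w * (1 - r) / (-1 - r)"
    unfolding q by (auto simp: real_le_rsqrt)
  then show ?thesis
  proof cases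
    case 1
    have "C = {}"
    proof (rule equals0I)
      fix x assume x: "x \<in> C"
      then have "x \<noteq> 0" using X(2) C by auto
      then have "(b - w \<bullet> (T *v x)) / norm (T *v x) \<le> norm w" by (intro ratio_le_norm[OF 1(1) T])
      then show False using C[OF x] 1(2) unfolding ratio by simp
    qed
    then show ?thesis by (simp add: concave_on_iff)
  next
    case 2
    have "T *v x \<noteq> 0" if "x \<in> X" for x using T X(2) that by metis
    then have "concave_on (convex hull C) (\<lambda>x. F ((b - w \<bullet> (T *v x)) / norm (T *v x)))"
      using C 2(2) unfolding ratio
      by (intro concave_on_convex_hull_revealed_concave_ratio[OF matrix_vector_mul_linear X(1) _ 2(1) F]) auto
    then show ?thesis unfolding ratio .
  qed
qed

section \<open>Chance constraints\<close>

lemma (in prob_space) mono_prob_le: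
  fixes X :: "'a \<Rightarrow> real"
  assumes "X \<in> borel_measurable M"
  shows "mono (\<lambda>t. prob {w \<in> space M. X w \<le> t})"
proof (intro monoI finite_measure_mono)
  fix s t :: real
  assume "s \<le> t"
  then show "{w \<in> space M. X w \<le> s} \<subseteq> {w \<in> space M. X w \<le> t}" by auto
  show "{w \<in> space M. X w \<le> t} \<in> events" using assms by measurable
qed

theorem lemma2p9:
  fixes M :: "'a measure"
    and X :: "(real^'n) set"
    and D :: "'k::finite \<Rightarrow> real"
    and v Z :: "'k \<Rightarrow> 'a \<Rightarrow> real^'n"
    and \<mu> :: "'k \<Rightarrow> real^'n"
    and A \<Sigma> :: "'k \<Rightarrow> real^'n^'n"
    and F :: "'k \<Rightarrow> real \<Rightarrow> real"
    and \<kappa> :: "real^'n \<Rightarrow> real"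
    and p :: real
    and r eps0 tss \<theta> :: "'k \<Rightarrow> real"
  defines "\<xi> \<equiv> \<lambda>i x w. (v i w \<bullet> x - \<mu> i \<bullet> x) / sqrt (x \<bullet> (\<Sigma> i *v x))"
    and "g \<equiv> \<lambda>i x. (D i - \<mu> i \<bullet> x) / sqrt (x \<bullet> (\<Sigma> i *v x))"
    and "S \<equiv> \<lambda>q. {x \<in> X. prob_space.prob M {w \<in> space M. \<forall>i. v i w \<bullet> x \<le> D i} \<ge> q}"
  assumes M: "prob_space M"
    and X: "X \<noteq> {}" "closed X" "convex X" "0 \<notin> X"
    and p: "0 \<le> p" "p \<le> 1"
    and v_meas: "\<And>i. v i \<in> borel_measurable M"
    and ellip: "\<And>i. spherical_rv M (Z i)"
      "\<And>i. distr M borel (v i) = distr M borel (\<lambda>w. \<mu> i + A i *v Z i w)"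
      "\<And>i. A i ** transpose (A i) = \<Sigma> i" "\<And>i. pos_def_matrix (\<Sigma> i)"
    and F_cdf: "\<And>i x t. x \<noteq> 0 \<Longrightarrow> F i t = prob_space.prob M {w \<in> space M. \<xi> i x w \<le> t}"
    and kappa: "\<And>x. x \<in> X \<Longrightarrow> 0 < \<kappa> x \<and> \<kappa> x \<le> 1"
    and copula: "\<And>x z. x \<in> X \<Longrightarrow>
        prob_space.prob M {w \<in> space M. \<forall>i. \<xi> i x w \<le> z i}
          = gumbel_copula (\<kappa> x) (\<lambda>i. F i (z i))"
    \<comment> \<open>Assumption A2 (1): exponents r i, eps0 i (used when r i = 0), thresholds tss i\<close>
    and A2_eps: "\<And>i. r i = 0 \<Longrightarrow> 0 < eps0 i \<and> eps0 i < 1"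
    and A2_conc: "\<And>i. revealed_concave (F i) (if r i = 0 then - eps0 i else r i) (tss i)"
    \<comment> \<open>theta i = theta^*_i, assumed defined\<close>
    and A2_theta: "\<And>i. theta_star (D i) (\<mu> i) (\<Sigma> i) (if r i = 0 then - eps0 i else r i) = Some (\<theta> i)"
    \<comment> \<open>Assumption A2 (2): p > p^*\<close>
    and A2_p: "p > max (1/2) (max (Max (range (\<lambda>i. F i (sqrt (\<theta> i)))))
                 (Max (range (\<lambda>i. F i (tss i powr (1 / (if r i = 0 then - eps0 i else r i)))))))"
  shows "\<forall>i. concave_on (convex hull (S p)) (\<lambda>x. F i (g i x))"
proof (intro allI)
  fix i
  interpret P: prob_space M by (rule M)
  define r' where "r' = (if r i = 0 then - eps0 i else r i)"
  have r': "r' \<noteq> 0" using A2_eps[of i] by (auto simp: r'_def)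
  have form_nonneg: "0 \<le> x \<bullet> (\<Sigma> i *v x)" for x
    using ellip(4)[of i] unfolding pos_def_matrix_def by (cases "x = 0") auto
  obtain x0 where "x0 \<in> X" using X(1) by blast
  then have "F i = (\<lambda>t. P.prob {w \<in> space M. \<xi> i x0 w \<le> t})"
    using X(4) by (intro ext F_cdf) auto
  then have mono: "mono (F i)" unfolding \<xi>_def using v_meas[of i] by (simp add: P.mono_prob_le)
  have above_p: "p \<le> F i (g i x)" if x: "x \<in> S p" for x
  proof -
    have "x \<noteq> 0" using x X(4) unfolding S_def by auto
    have "p \<le> P.prob {w \<in> space M. \<forall>j. v j w \<bullet> x \<le> D j}" using x unfolding S_def by auto
    also have "\<dots> \<le> P.prob {w \<in> space M. \<xi> i x w \<le> g i x}"
      unfolding \<xi>_def g_def using v_meas[of i] form_nonneg[of x]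
      by (intro P.finite_measure_mono) (auto intro!: divide_right_mono)
    also have "\<dots> = F i (g i x)" using F_cdf[OF \<open>x \<noteq> 0\<close>] by simp
    finally show ?thesis .
  qed
  have above: "c < g i x" if "x \<in> S p" and "F i c < p" for x c
  proof (rule ccontr)
    assume "\<not> c < g i x"
    then have "F i (g i x) \<le> F i c" using mono by (simp add: monoD)
    then show False using that above_p by fastforce
  qed
  have "F i (sqrt (\<theta> i)) < p" "F i (tss i powr (1 / r')) < p"
    using A2_p Max_ge[of "range _" "F i _"] unfolding r'_def by fastforce+
  then have "x \<in> X \<and> max (sqrt (\<theta> i)) (tss i powr (1 / r')) < g i x" if "x \<in> S p" for x
    using above[OF that] that unfolding S_def by simp
  then show "concave_on (convex hull (S p)) (\<lambda>x. F i (g i x))"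
    unfolding g_def
    by (rule concave_on_convex_hull_above_theta_star[OF ellip(3,4) X(3,4) r'
          A2_theta[of i, folded r'_def] mono A2_conc[of i, folded r'_def]])
qed

end
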